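(* Let $f_1,\dots,f_n:\mathbb{R}^d\to\mathbb{R}$ be convex with each $f_i$ being $L_i$-smooth, and suppose $f = \frac{1}{n}\sum_{i=1}^n f_i$ is $L$-smooth; let $x^*$ be a minimizer of $f$. Let $\mathcal{C}_1,\dots,\mathcal{C}_n$ be independent randomized compression operators with $\mathcal{C}_i\in\mathbb{B}^d(\omega_i)$. For points $x^k, h_1^k,\dots,h_n^k\in\mathbb{R}^d$ let $g^k = \frac{1}{n}\sum_{i=1}^n\left[h_i^k + \mathcal{C}_i(\nabla f_i(x^k) - h_i^k)\right]$. Then \[ \mathbb{E}\|g^k - \nabla f(x^* )\|^2 \leq 2\left(L + \frac{2\max_i\{L_i\omega_i\}}{n}\right)D_f(x^k,x^* ) + \frac{2}{n}\sigma_k^2, \] where $\sigma_k^2 = \frac{1}{n}\sum_{i=1}^n\omega_i\|h_i^k - \nabla f_i(x^* )\|^2$ and the expectation is over the compressors.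
   Context: A (random) operator $\mathcal{C}$ belongs to $\mathbb{B}^d(\omega)$ if $\mathbb{E}[\mathcal{C}(x)] = x$ and $\mathbb{E}\|\mathcal{C}(x)-x\|^2\leq\omega\|x\|^2$ for all $x$. The Bregman divergence is $D_f(x,y) = f(x)-f(y)-\langle\nabla f(y),x-y\rangle$. A differentiable $g$ is $L$-smooth if $\|\nabla g(x)-\nabla g(y)\|\leq L\|x-y\|$ for all $x,y$. *)

theory Defs
  imports "HOL-Probability.Probability"
begin

definition has_gradient :: "('a::euclidean_space \<Rightarrow> real) \<Rightarrow> ('a \<Rightarrow> 'a) \<Rightarrow> bool" where
  "has_gradient F G \<longleftrightarrow> (\<forall>x. (F has_derivative (\<lambda>h. G x \<bullet> h)) (at x))"

definition L_smooth :: "('a::euclidean_space \<Rightarrow> real) \<Rightarrow> ('a \<Rightarrow> 'a) \<Rightarrow> real \<Rightarrow> bool" where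
  "L_smooth F G L \<longleftrightarrow> has_gradient F G \<and> (\<forall>x y. norm (G x - G y) \<le> L * norm (x - y))"

definition bregman :: "('a::euclidean_space \<Rightarrow> real) \<Rightarrow> ('a \<Rightarrow> 'a) \<Rightarrow> 'a \<Rightarrow> 'a \<Rightarrow> real" where
  "bregman F G x y = F x - F y - G y \<bullet> (x - y)"

definition op_space :: "('a::euclidean_space \<Rightarrow> 'a) measure" where
  "op_space = PiM UNIV (\<lambda>_. borel)"

text \<open>Random operator C on probability space M in the class B^d(w):
  unbiased and with relative variance bounded by w.\<close>
definition in_B :: "'m measure \<Rightarrow> ('m \<Rightarrow> 'a::euclidean_space \<Rightarrow> 'a) \<Rightarrow> real \<Rightarrow> bool" where
  "in_B M C w \<longleftrightarrow> 0 \<le> w \<and> C \<in> measurable M op_space \<and>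
     (\<forall>x. integrable M (\<lambda>\<omega>. C \<omega> x) \<and> (\<integral>\<omega>. C \<omega> x \<partial>M) = x \<and>
          (\<integral>\<^sup>+\<omega>. ennreal ((norm (C \<omega> x - x))\<^sup>2) \<partial>M) \<le> ennreal (w * (norm x)\<^sup>2))"

end

theory Submission
  imports Defs
begin

text \<open>Write the estimator error as \<open>g\<^sup>k - \<nabla>f(x\<^sup>*) = (\<nabla>f(x\<^sup>k) - \<nabla>f(x\<^sup>*)) + (1/n) \<Sum>\<^sub>i (\<C>\<^sub>i(a\<^sub>i) - a\<^sub>i)\<close>
  with \<open>a\<^sub>i = \<nabla>f\<^sub>i(x\<^sup>k) - h\<^sub>i\<close>. The compression errors are independent and centred, so all cross
  terms vanish in expectation and the second moment is
  \<open>\<parallel>\<nabla>f(x\<^sup>k) - \<nabla>f(x\<^sup>*)\<parallel>\<^sup>2 + (1/n\<^sup>2) \<Sum>\<^sub>i E\<parallel>\<C>\<^sub>i(a\<^sub>i) - a\<^sub>i\<parallel>\<^sup>2 \<le> \<parallel>\<nabla>f(x\<^sup>k) - \<nabla>f(x\<^sup>*)\<parallel>\<^sup>2 + (1/n\<^sup>2) \<Sum>\<^sub>i \<omega>\<^sub>i \<parallel>a\<^sub>i\<parallel>\<^sup>2\<close>.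
  Co-coercivity of convex \<open>L\<close>-smooth functions, \<open>\<parallel>\<nabla>g(x) - \<nabla>g(y)\<parallel>\<^sup>2 \<le> 2 L D\<^sub>g(x,y)\<close>, bounds the
  first term for \<open>f\<close> and, after splitting \<open>a\<^sub>i = (\<nabla>f\<^sub>i(x\<^sup>k) - \<nabla>f\<^sub>i(x\<^sup>*)) - (h\<^sub>i - \<nabla>f\<^sub>i(x\<^sup>*))\<close>, the
  second term for each \<open>f\<^sub>i\<close>; finally \<open>D\<^sub>f\<close> is the average of the \<open>D\<^sub>f\<^sub>i\<close>.\<close>

lemma has_gradient_line_derivative:
  assumes "has_gradient F G"
  shows "((\<lambda>t. F (x + t *\<^sub>R d)) has_real_derivative G (x + t *\<^sub>R d) \<bullet> d) (at t)"
proof -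
  have "(F has_derivative (\<lambda>v. G (x + t *\<^sub>R d) \<bullet> v)) (at (x + t *\<^sub>R d))"
    using assms unfolding has_gradient_def by blast
  then have "((\<lambda>t. F (x + t *\<^sub>R d)) has_derivative (\<lambda>s. G (x + t *\<^sub>R d) \<bullet> (s *\<^sub>R d))) (at t)"
    by (rule has_derivative_compose[rotated]) (auto intro!: derivative_eq_intros)
  then show ?thesis
    by (rule has_derivative_imp_has_field_derivative) (simp add: mult.commute)
qed

lemma convex_on_gradient_inequality:
  assumes "convex_on UNIV F" "has_gradient F G"
  shows "F y + G y \<bullet> (z - y) \<le> F z"
proof -
  define \<phi> where "\<phi> = (\<lambda>t. F (y + t *\<^sub>R (z - y)))"
  have "convex_on UNIV \<phi>"
  proof (rule convex_onI)
    fix t u v :: real assume "0 < t" "t < 1"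
    have "y + ((1 - t) *\<^sub>R u + t *\<^sub>R v) *\<^sub>R (z - y)
          = (1 - t) *\<^sub>R (y + u *\<^sub>R (z - y)) + t *\<^sub>R (y + v *\<^sub>R (z - y))"
      by (simp add: algebra_simps)
    then show "\<phi> ((1 - t) *\<^sub>R u + t *\<^sub>R v) \<le> (1 - t) * \<phi> u + t * \<phi> v"
      unfolding \<phi>_def using convex_onD[OF assms(1), of t] \<open>0 < t\<close> \<open>t < 1\<close> by simp
  qed simp
  moreover have "(\<phi> has_real_derivative G y \<bullet> (z - y)) (at 0 within UNIV)"
    using has_gradient_line_derivative[OF assms(2), of y "z - y" 0] by (simp add: \<phi>_def)
  ultimately have "G y \<bullet> (z - y) * (1 - 0) \<le> \<phi> 1 - \<phi> 0"
    by (intro convex_on_imp_above_tangent) auto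
  then show ?thesis by (simp add: \<phi>_def)
qed

lemma bregman_nonneg:
  assumes "convex_on UNIV F" "has_gradient F G"
  shows "0 \<le> bregman F G x y"
  using convex_on_gradient_inequality[OF assms, of y x] by (simp add: bregman_def)

lemma bregman_scaled_sum:
  "bregman (\<lambda>x. c * (\<Sum>i\<in>I. F i x)) (\<lambda>x. c *\<^sub>R (\<Sum>i\<in>I. G i x)) x y
     = c * (\<Sum>i\<in>I. bregman (F i) (G i) x y)"
  by (simp add: bregman_def inner_sum_left sum_subtractf right_diff_distrib)

lemma L_smooth_nonneg:
  fixes F :: "'a::euclidean_space \<Rightarrow> real"
  assumes "L_smooth F G L"
  shows "0 \<le> L"
proof -
  obtain e :: 'a where "e \<in> Basis" using nonempty_Basis by blast
  moreover have "norm (G e - G 0) \<le> L * norm (e - 0)"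
    using assms unfolding L_smooth_def by blast
  ultimately have "norm (G e - G 0) \<le> L" by simp
  then show ?thesis using norm_ge_zero order_trans by blast
qed

lemma L_smooth_quadratic_upper_bound:
  assumes "L_smooth F G L"
  shows "F z \<le> F x + G x \<bullet> (z - x) + L / 2 * (norm (z - x))\<^sup>2"
proof -
  have grad: "has_gradient F G" and lip: "\<And>x y. norm (G x - G y) \<le> L * norm (x - y)"
    using assms by (auto simp: L_smooth_def)
  define d where "d = z - x"
  define \<phi> where "\<phi> t = F (x + t *\<^sub>R d) - t * (G x \<bullet> d) - L / 2 * t\<^sup>2 * (norm d)\<^sup>2" for t
  define \<phi>' where "\<phi>' t = (G (x + t *\<^sub>R d) - G x) \<bullet> d - L * t * (norm d)\<^sup>2" for t
  have "(\<phi> has_real_derivative \<phi>' t) (at t)" for t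
    unfolding \<phi>_def \<phi>'_def
    by (rule derivative_eq_intros has_gradient_line_derivative[OF grad] refl)+
       (simp add: power2_eq_square inner_diff_left)
  then obtain \<xi> where \<xi>: "0 < \<xi>" "\<xi> < 1" "\<phi> 1 - \<phi> 0 = (1 - 0) * \<phi>' \<xi>"
    using MVT2[of 0 1 \<phi> \<phi>'] by auto
  have "(G (x + \<xi> *\<^sub>R d) - G x) \<bullet> d \<le> norm (G (x + \<xi> *\<^sub>R d) - G x) * norm d"
    by (rule norm_cauchy_schwarz)
  also have "\<dots> \<le> L * norm (\<xi> *\<^sub>R d) * norm d"
    using lip[of "x + \<xi> *\<^sub>R d" x] by (intro mult_right_mono) auto
  also have "\<dots> = L * \<xi> * (norm d)\<^sup>2"
    using \<xi> by (simp add: power2_eq_square)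
  finally have "\<phi> 1 \<le> \<phi> 0"
    using \<xi> by (simp add: \<phi>'_def)
  then show ?thesis by (simp add: \<phi>_def d_def)
qed

text \<open>Minimising the quadratic upper bound at x along the gradient difference and comparing
  with the tangent at y gives co-coercivity.\<close>
lemma convex_L_smooth_gradient_diff_le_bregman:
  assumes "convex_on UNIV F" "L_smooth F G L"
  shows "(norm (G x - G y))\<^sup>2 \<le> 2 * L * bregman F G x y"
proof (cases "L = 0")
  case True
  with assms(2) have "G x = G y" by (auto simp: L_smooth_def dest: spec[of _ x])
  with True show ?thesis by simp
next
  case False
  with L_smooth_nonneg[OF assms(2)] have "0 < L" by simp
  have grad: "has_gradient F G" using assms(2) by (simp add: L_smooth_def)
  define g where "g = G x - G y"
  define z where "z = x - (1 / L) *\<^sub>R g"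
  have "G y \<bullet> (z - y) - G x \<bullet> (z - x) = G y \<bullet> (x - y) + (G x - G y) \<bullet> g / L"
    by (simp add: z_def inner_diff_right inner_diff_left algebra_simps diff_divide_distrib)
  also have "\<dots> = G y \<bullet> (x - y) + 2 * ((norm g)\<^sup>2 / (2 * L))"
    by (simp add: g_def power2_norm_eq_inner)
  finally have "G y \<bullet> (z - y) - G x \<bullet> (z - x) = G y \<bullet> (x - y) + 2 * ((norm g)\<^sup>2 / (2 * L))" .
  moreover have "F y + G y \<bullet> (z - y) \<le> F x + G x \<bullet> (z - x) + L / 2 * (norm (z - x))\<^sup>2"
    using convex_on_gradient_inequality[OF assms(1) grad, of y z]
      L_smooth_quadratic_upper_bound[OF assms(2), of z x] by linarith
  moreover have "L / 2 * (norm (z - x))\<^sup>2 = (norm g)\<^sup>2 / (2 * L)"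
    using \<open>0 < L\<close> by (simp add: z_def power2_eq_square)
  ultimately have "(norm g)\<^sup>2 / (2 * L) \<le> bregman F G x y"
    unfolding bregman_def by linarith
  then show ?thesis
    using \<open>0 < L\<close> by (simp add: g_def field_simps)
qed

lemma convex_on_sum_fun:
  assumes "convex S" "\<And>i. i \<in> I \<Longrightarrow> convex_on S (f i)"
  shows "convex_on S (\<lambda>x. \<Sum>i\<in>I. f i x)"
  using assms(2)
  by (induction I rule: infinite_finite_induct) (auto simp: convex_on_const assms(1))

lemma power2_norm_add_le: "(norm (a + b))\<^sup>2 \<le> 2 * (norm a)\<^sup>2 + 2 * (norm b)\<^sup>2"
proof -
  have "(norm (a + b))\<^sup>2 \<le> (norm a + norm b)\<^sup>2"
    by (simp add: norm_triangle_ineq power_mono)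
  also have "\<dots> \<le> 2 * (norm a)\<^sup>2 + 2 * (norm b)\<^sup>2"
    using sum_squares_bound[of "norm a" "norm b"] by (simp add: power2_sum)
  finally show ?thesis .
qed

lemma compression_error_le_bregman:
  fixes F :: "'a::euclidean_space \<Rightarrow> real"
  assumes "convex_on UNIV F" "L_smooth F G L" "0 \<le> w" "L * w \<le> m"
  shows "w * (norm (G x - v))\<^sup>2 \<le> 4 * m * bregman F G x y + 2 * (w * (norm (v - G y))\<^sup>2)"
proof -
  have D: "0 \<le> bregman F G x y"
    using assms(1,2) by (simp add: L_smooth_def bregman_nonneg)
  have "w * (norm (G x - v))\<^sup>2 \<le> w * (2 * (norm (G x - G y))\<^sup>2 + 2 * (norm (v - G y))\<^sup>2)"
    using power2_norm_add_le[of "G x - G y" "G y - v"] assms(3)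
    by (intro mult_left_mono) (simp_all add: norm_minus_commute)
  moreover have "w * (norm (G x - G y))\<^sup>2 \<le> w * (2 * L * bregman F G x y)"
    using convex_L_smooth_gradient_diff_le_bregman[OF assms(1,2)] assms(3) by (rule mult_left_mono)
  moreover have "w * (2 * L * bregman F G x y) \<le> 2 * m * bregman F G x y"
    using mult_right_mono[OF assms(4) D] by (simp add: algebra_simps)
  ultimately show ?thesis by (simp add: algebra_simps)
qed

lemma averaged_compression_error_le:
  fixes f :: "nat \<Rightarrow> 'a::euclidean_space \<Rightarrow> real"
  assumes "\<And>i. i < n \<Longrightarrow> convex_on UNIV (f i)" "\<And>i. i < n \<Longrightarrow> L_smooth (f i) (gf i) (Li i)"
    and "\<And>i. i < n \<Longrightarrow> 0 \<le> w i"
  shows "(1 / real n)\<^sup>2 * (\<Sum>i<n. w i * (norm (gf i x - v i))\<^sup>2)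
      \<le> 4 * Max ((\<lambda>i. Li i * w i) ` {..<n}) / real n
            * bregman (\<lambda>x. (1 / real n) * (\<Sum>i<n. f i x)) (\<lambda>x. (1 / real n) *\<^sub>R (\<Sum>i<n. gf i x)) x y
          + (2 / real n) * ((1 / real n) * (\<Sum>i<n. w i * (norm (v i - gf i y))\<^sup>2))"
proof -
  define m where "m = Max ((\<lambda>i. Li i * w i) ` {..<n})"
  define D where "D = (\<Sum>i<n. bregman (f i) (gf i) x y)"
  define \<sigma> where "\<sigma> = (\<Sum>i<n. w i * (norm (v i - gf i y))\<^sup>2)"
  have "(\<Sum>i<n. w i * (norm (gf i x - v i))\<^sup>2)
      \<le> (\<Sum>i<n. 4 * m * bregman (f i) (gf i) x y + 2 * (w i * (norm (v i - gf i y))\<^sup>2))"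
    using assms by (intro sum_mono compression_error_le_bregman) (auto simp: m_def)
  also have "\<dots> = 4 * m * D + 2 * \<sigma>"
    by (simp add: D_def \<sigma>_def sum.distrib sum_distrib_left)
  finally have "(1 / real n)\<^sup>2 * (\<Sum>i<n. w i * (norm (gf i x - v i))\<^sup>2)
      \<le> (1 / real n)\<^sup>2 * (4 * m * D + 2 * \<sigma>)"
    by (rule mult_left_mono) simp
  also have "\<dots> = 4 * m / real n * ((1 / real n) * D) + (2 / real n) * ((1 / real n) * \<sigma>)"
    by (simp add: field_simps power2_eq_square) (simp add: add_divide_distrib)
  finally show ?thesis
    by (simp only: bregman_scaled_sum m_def D_def \<sigma>_def)
qed

lemma
  fixes f :: "'a \<Rightarrow> real"
  assumes "f \<in> borel_measurable M" "\<And>x. 0 \<le> f x" "(\<integral>\<^sup>+x. ennreal (f x) \<partial>M) \<le> ennreal c" "0 \<le> c"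
  shows nn_integral_le_imp_integrable: "integrable M f"
    and nn_integral_le_imp_integral_le: "integral\<^sup>L M f \<le> c"
proof -
  have "(\<integral>\<^sup>+x. ennreal (f x) \<partial>M) < \<infinity>"
    using assms(3) by (simp add: le_less_trans)
  then show "integrable M f"
    using assms(1,2) by (intro integrableI_nonneg) auto
  have "integral\<^sup>L M f = enn2real (\<integral>\<^sup>+x. ennreal (f x) \<partial>M)"
    using assms(1,2) by (intro integral_eq_nn_integral) auto
  also have "\<dots> \<le> c"
    using assms(3,4) by (metis enn2real_ennreal enn2real_mono ennreal_less_top)
  finally show "integral\<^sup>L M f \<le> c" .
qed

lemma (in prob_space)
  fixes Y :: "'i \<Rightarrow> 'a \<Rightarrow> 'b::euclidean_space"
  assumes indep: "indep_vars (\<lambda>_. borel) Y I" and "i \<in> I" "j \<in> I" "i \<noteq> j"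
    and "integrable M (Y i)" "integrable M (Y j)"
  shows indep_vars_integrable_inner: "integrable M (\<lambda>\<omega>. Y i \<omega> \<bullet> Y j \<omega>)"
    and indep_vars_integral_inner:
      "(\<integral>\<omega>. Y i \<omega> \<bullet> Y j \<omega> \<partial>M) = (\<integral>\<omega>. Y i \<omega> \<partial>M) \<bullet> (\<integral>\<omega>. Y j \<omega> \<partial>M)"
proof -
  have coordinate: "integrable M (\<lambda>\<omega>. (Y i \<omega> \<bullet> b) * (Y j \<omega> \<bullet> b)) \<and>
      (\<integral>\<omega>. (Y i \<omega> \<bullet> b) * (Y j \<omega> \<bullet> b) \<partial>M) = ((\<integral>\<omega>. Y i \<omega> \<partial>M) \<bullet> b) * ((\<integral>\<omega>. Y j \<omega> \<partial>M) \<bullet> b)"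
    for b
  proof -
    have "indep_vars (\<lambda>_. borel) (\<lambda>k \<omega>. Y k \<omega> \<bullet> b) {i, j}"
      using assms by (intro indep_vars_compose2[OF indep_vars_subset[OF indep]]) auto
    moreover have "integrable M (\<lambda>\<omega>. Y k \<omega> \<bullet> b)" if "k \<in> {i, j}" for k
      using assms that by auto
    ultimately show ?thesis
      using indep_vars_integrable[of "{i, j}" "\<lambda>k \<omega>. Y k \<omega> \<bullet> b"]
        indep_vars_lebesgue_integral[of "{i, j}" "\<lambda>k \<omega>. Y k \<omega> \<bullet> b"] assms
      by auto
  qed
  have inner: "Y i \<omega> \<bullet> Y j \<omega> = (\<Sum>b\<in>Basis. (Y i \<omega> \<bullet> b) * (Y j \<omega> \<bullet> b))" for \<omega>
    by (rule euclidean_inner)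
  show "integrable M (\<lambda>\<omega>. Y i \<omega> \<bullet> Y j \<omega>)"
    unfolding inner using coordinate by auto
  show "(\<integral>\<omega>. Y i \<omega> \<bullet> Y j \<omega> \<partial>M) = (\<integral>\<omega>. Y i \<omega> \<partial>M) \<bullet> (\<integral>\<omega>. Y j \<omega> \<partial>M)"
  proof -
    have "(\<integral>\<omega>. Y i \<omega> \<bullet> Y j \<omega> \<partial>M) = (\<Sum>b\<in>Basis. \<integral>\<omega>. (Y i \<omega> \<bullet> b) * (Y j \<omega> \<bullet> b) \<partial>M)"
      unfolding inner using coordinate by (simp add: integral_sum)
    also have "\<dots> = (\<Sum>b\<in>Basis. ((\<integral>\<omega>. Y i \<omega> \<partial>M) \<bullet> b) * ((\<integral>\<omega>. Y j \<omega> \<partial>M) \<bullet> b))"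
      using coordinate by simp
    also have "\<dots> = (\<integral>\<omega>. Y i \<omega> \<partial>M) \<bullet> (\<integral>\<omega>. Y j \<omega> \<partial>M)"
      by (rule euclidean_inner[symmetric])
    finally show ?thesis .
  qed
qed

lemma (in prob_space)
  fixes Y :: "'i \<Rightarrow> 'a \<Rightarrow> 'b::euclidean_space"
  assumes "finite I" "indep_vars (\<lambda>_. borel) Y I"
    and "\<And>i. i \<in> I \<Longrightarrow> integrable M (Y i)" "\<And>i. i \<in> I \<Longrightarrow> (\<integral>\<omega>. Y i \<omega> \<partial>M) = 0"
    and "\<And>i. i \<in> I \<Longrightarrow> integrable M (\<lambda>\<omega>. (norm (Y i \<omega>))\<^sup>2)"
  shows integrable_second_moment_indep_sum:
      "integrable M (\<lambda>\<omega>. (norm (c + (\<Sum>i\<in>I. Y i \<omega>)))\<^sup>2)"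
    and second_moment_indep_sum:
      "(\<integral>\<omega>. (norm (c + (\<Sum>i\<in>I. Y i \<omega>)))\<^sup>2 \<partial>M)
         = (norm c)\<^sup>2 + (\<Sum>i\<in>I. \<integral>\<omega>. (norm (Y i \<omega>))\<^sup>2 \<partial>M)"
proof -
  have cross: "integrable M (\<lambda>\<omega>. Y i \<omega> \<bullet> Y j \<omega>) \<and>
      (\<integral>\<omega>. Y i \<omega> \<bullet> Y j \<omega> \<partial>M) = (if i = j then \<integral>\<omega>. (norm (Y i \<omega>))\<^sup>2 \<partial>M else 0)"
    if "i \<in> I" "j \<in> I" for i j
    using that assms
    by (cases "i = j")
       (auto simp: power2_norm_eq_inner indep_vars_integrable_inner indep_vars_integral_inner)
  have expand: "(norm (c + (\<Sum>i\<in>I. Y i \<omega>)))\<^sup>2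
      = (norm c)\<^sup>2 + 2 * (\<Sum>i\<in>I. c \<bullet> Y i \<omega>) + (\<Sum>i\<in>I. \<Sum>j\<in>I. Y i \<omega> \<bullet> Y j \<omega>)" for \<omega>
    by (simp add: power2_norm_eq_inner inner_add_left inner_add_right inner_sum_left
        inner_sum_right inner_commute)
  show "integrable M (\<lambda>\<omega>. (norm (c + (\<Sum>i\<in>I. Y i \<omega>)))\<^sup>2)"
    unfolding expand using cross assms by (auto intro!: integrable_sum)
  have "(\<integral>\<omega>. (norm (c + (\<Sum>i\<in>I. Y i \<omega>)))\<^sup>2 \<partial>M)
      = (norm c)\<^sup>2 + 2 * (\<Sum>i\<in>I. c \<bullet> (\<integral>\<omega>. Y i \<omega> \<partial>M))
          + (\<Sum>i\<in>I. \<Sum>j\<in>I. \<integral>\<omega>. Y i \<omega> \<bullet> Y j \<omega> \<partial>M)"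
    unfolding expand using cross assms
    by (simp add: integral_add integral_sum integrable_sum prob_space)
  also have "\<dots> = (norm c)\<^sup>2 + (\<Sum>i\<in>I. \<integral>\<omega>. (norm (Y i \<omega>))\<^sup>2 \<partial>M)"
  proof -
    have "(\<Sum>j\<in>I. \<integral>\<omega>. Y i \<omega> \<bullet> Y j \<omega> \<partial>M)
        = (\<Sum>j\<in>I. if i = j then \<integral>\<omega>. (norm (Y i \<omega>))\<^sup>2 \<partial>M else 0)" if "i \<in> I" for i
      using cross that by (intro sum.cong) auto
    then show ?thesis
      using assms(1,4) by simp
  qed
  finally show "(\<integral>\<omega>. (norm (c + (\<Sum>i\<in>I. Y i \<omega>)))\<^sup>2 \<partial>M)
      = (norm c)\<^sup>2 + (\<Sum>i\<in>I. \<integral>\<omega>. (norm (Y i \<omega>))\<^sup>2 \<partial>M)" .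
qed

lemma measurable_op_space_apply [measurable]: "(\<lambda>T. T x) \<in> borel_measurable op_space"
  unfolding op_space_def by (rule measurable_component_singleton) simp

lemma in_B_apply_measurable:
  assumes "in_B M C w"
  shows "(\<lambda>\<omega>. C \<omega> x) \<in> borel_measurable M"
  using assms unfolding in_B_def by (auto intro: measurable_compose[OF _ measurable_op_space_apply])

lemma
  assumes "prob_space M" "in_B M C w"
  shows in_B_integrable_error: "integrable M (\<lambda>\<omega>. C \<omega> x - x)"
    and in_B_integral_error: "(\<integral>\<omega>. C \<omega> x - x \<partial>M) = 0"
    and in_B_integrable_error_sq: "integrable M (\<lambda>\<omega>. (norm (C \<omega> x - x))\<^sup>2)"
    and in_B_integral_error_sq_le: "(\<integral>\<omega>. (norm (C \<omega> x - x))\<^sup>2 \<partial>M) \<le> w * (norm x)\<^sup>2"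
proof -
  interpret prob_space M by fact
  have C: "integrable M (\<lambda>\<omega>. C \<omega> x)" "(\<integral>\<omega>. C \<omega> x \<partial>M) = x"
    "(\<integral>\<^sup>+\<omega>. ennreal ((norm (C \<omega> x - x))\<^sup>2) \<partial>M) \<le> ennreal (w * (norm x)\<^sup>2)" "0 \<le> w"
    using assms(2) by (auto simp: in_B_def)
  show "integrable M (\<lambda>\<omega>. C \<omega> x - x)" "(\<integral>\<omega>. C \<omega> x - x \<partial>M) = 0"
    using C by (simp_all add: prob_space)
  have "(\<lambda>\<omega>. (norm (C \<omega> x - x))\<^sup>2) \<in> borel_measurable M"
    using in_B_apply_measurable[OF assms(2)] by measurable
  then show "integrable M (\<lambda>\<omega>. (norm (C \<omega> x - x))\<^sup>2)"
    and "(\<integral>\<omega>. (norm (C \<omega> x - x))\<^sup>2 \<partial>M) \<le> w * (norm x)\<^sup>2"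
    using C by (auto intro: nn_integral_le_imp_integrable nn_integral_le_imp_integral_le)
qed

lemma compressed_sum_second_moment:
  fixes C :: "'i \<Rightarrow> 'm \<Rightarrow> 'a::euclidean_space \<Rightarrow> 'a"
  assumes "prob_space M" "finite I" "\<And>i. i \<in> I \<Longrightarrow> in_B M (C i) (w i)"
    and "prob_space.indep_vars M (\<lambda>_. op_space) C I"
  shows "(\<integral>\<^sup>+\<omega>. ennreal ((norm (c + t *\<^sub>R (\<Sum>i\<in>I. C i \<omega> (a i) - a i)))\<^sup>2) \<partial>M)
           \<le> ennreal ((norm c)\<^sup>2 + t\<^sup>2 * (\<Sum>i\<in>I. w i * (norm (a i))\<^sup>2))"
proof -
  interpret prob_space M by fact
  define Y where "Y = (\<lambda>i \<omega>. t *\<^sub>R (C i \<omega> (a i) - a i))"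
  have indep: "indep_vars (\<lambda>_. borel) Y I"
    unfolding Y_def by (rule indep_vars_compose2[OF assms(4)]) measurable
  have Y: "integrable M (Y i)" "(\<integral>\<omega>. Y i \<omega> \<partial>M) = 0"
    "integrable M (\<lambda>\<omega>. (norm (Y i \<omega>))\<^sup>2)"
    "(\<integral>\<omega>. (norm (Y i \<omega>))\<^sup>2 \<partial>M) \<le> t\<^sup>2 * (w i * (norm (a i))\<^sup>2)" if "i \<in> I" for i
    using in_B_integrable_error[OF assms(1) assms(3)[OF that]]
      in_B_integral_error[OF assms(1) assms(3)[OF that]]
      in_B_integrable_error_sq[OF assms(1) assms(3)[OF that]]
      in_B_integral_error_sq_le[OF assms(1) assms(3)[OF that]]
    by (auto simp: Y_def power_mult_distrib intro: mult_left_mono)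
  have sum_Y: "c + t *\<^sub>R (\<Sum>i\<in>I. C i \<omega> (a i) - a i) = c + (\<Sum>i\<in>I. Y i \<omega>)" for \<omega>
    by (simp add: Y_def scaleR_sum_right)
  have "(\<integral>\<omega>. (norm (c + (\<Sum>i\<in>I. Y i \<omega>)))\<^sup>2 \<partial>M) = (norm c)\<^sup>2 + (\<Sum>i\<in>I. \<integral>\<omega>. (norm (Y i \<omega>))\<^sup>2 \<partial>M)"
    using assms(2) indep Y by (intro second_moment_indep_sum) auto
  also have "\<dots> \<le> (norm c)\<^sup>2 + t\<^sup>2 * (\<Sum>i\<in>I. w i * (norm (a i))\<^sup>2)"
    using Y by (simp add: sum_distrib_left sum_mono)
  finally show ?thesis
    unfolding sum_Y using assms(2) indep Y
    by (subst nn_integral_eq_integral) (auto intro: integrable_second_moment_indep_sum ennreal_leI)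
qed

theorem lemma3:
  fixes M :: "'m measure"
    and n :: nat
    and f :: "nat \<Rightarrow> 'a::euclidean_space \<Rightarrow> real"
    and gf :: "nat \<Rightarrow> 'a \<Rightarrow> 'a"
    and Li :: "nat \<Rightarrow> real" and L :: real
    and xstar xk :: 'a
    and h :: "nat \<Rightarrow> 'a"
    and C :: "nat \<Rightarrow> 'm \<Rightarrow> 'a \<Rightarrow> 'a"
    and w :: "nat \<Rightarrow> real"
  assumes "prob_space M"
    and "n \<ge> 1"
    and "\<And>i. i < n \<Longrightarrow> convex_on UNIV (f i)"
    and "\<And>i. i < n \<Longrightarrow> L_smooth (f i) (gf i) (Li i)"
    and "L_smooth (\<lambda>x. (1 / real n) * (\<Sum>i<n. f i x))
                   (\<lambda>x. (1 / real n) *\<^sub>R (\<Sum>i<n. gf i x)) L"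
    and "\<forall>y. (1 / real n) * (\<Sum>i<n. f i xstar) \<le> (1 / real n) * (\<Sum>i<n. f i y)"
    and "\<And>i. i < n \<Longrightarrow> in_B M (C i) (w i)"
    and "prob_space.indep_vars M (\<lambda>_. op_space) C {..<n}"
  shows "(\<integral>\<^sup>+\<omega>. ennreal ((norm ((1 / real n) *\<^sub>R (\<Sum>i<n. h i + C i \<omega> (gf i xk - h i))
                           - (1 / real n) *\<^sub>R (\<Sum>i<n. gf i xstar)))\<^sup>2) \<partial>M)
         \<le> ennreal (2 * (L + 2 * Max ((\<lambda>i. Li i * w i) ` {..<n}) / real n)
                      * bregman (\<lambda>x. (1 / real n) * (\<Sum>i<n. f i x))
                                (\<lambda>x. (1 / real n) *\<^sub>R (\<Sum>i<n. gf i x)) xk xstar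
                    + (2 / real n) * ((1 / real n) * (\<Sum>i<n. w i * (norm (h i - gf i xstar))\<^sup>2)))"
proof -
  define F where "F = (\<lambda>x. (1 / real n) * (\<Sum>i<n. f i x))"
  define G where "G = (\<lambda>x. (1 / real n) *\<^sub>R (\<Sum>i<n. gf i x))"
  define m where "m = Max ((\<lambda>i. Li i * w i) ` {..<n})"
  define \<sigma> where "\<sigma> = (\<Sum>i<n. w i * (norm (h i - gf i xstar))\<^sup>2)"
  have estimator: "(1 / real n) *\<^sub>R (\<Sum>i<n. h i + C i \<omega> (gf i xk - h i)) - (1 / real n) *\<^sub>R (\<Sum>i<n. gf i xstar)
      = (G xk - G xstar) + (1 / real n) *\<^sub>R (\<Sum>i<n. C i \<omega> (gf i xk - h i) - (gf i xk - h i))" for \<omega>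
    by (simp add: G_def sum.distrib sum_subtractf algebra_simps)
  have "convex_on UNIV F"
    unfolding F_def using assms(3) by (intro convex_on_cmul convex_on_sum_fun) auto
  then have gradient_term: "(norm (G xk - G xstar))\<^sup>2 \<le> 2 * L * bregman F G xk xstar"
    using assms(5) by (intro convex_L_smooth_gradient_diff_le_bregman) (simp_all add: F_def G_def)
  have compression_term: "(1 / real n)\<^sup>2 * (\<Sum>i<n. w i * (norm (gf i xk - h i))\<^sup>2)
      \<le> 4 * m / real n * bregman F G xk xstar + (2 / real n) * ((1 / real n) * \<sigma>)"
    unfolding F_def G_def m_def \<sigma>_def using assms(3,4,7)
    by (intro averaged_compression_error_le) (auto simp: in_B_def)
  have "(\<integral>\<^sup>+\<omega>. ennreal ((norm ((G xk - G xstar)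
          + (1 / real n) *\<^sub>R (\<Sum>i<n. C i \<omega> (gf i xk - h i) - (gf i xk - h i))))\<^sup>2) \<partial>M)
      \<le> ennreal ((norm (G xk - G xstar))\<^sup>2 + (1 / real n)\<^sup>2 * (\<Sum>i<n. w i * (norm (gf i xk - h i))\<^sup>2))"
    using assms(1,7,8) by (intro compressed_sum_second_moment) auto
  also have "\<dots> \<le> ennreal (2 * (L + 2 * m / real n) * bregman F G xk xstar + (2 / real n) * ((1 / real n) * \<sigma>))"
    using gradient_term compression_term by (intro ennreal_leI) (simp add: algebra_simps)
  finally show ?thesis
    unfolding estimator by (simp only: F_def G_def m_def \<sigma>_def)
qed

end
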